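(* Let $(M,d)$ be a bounded metric space with metric normal structure such that $\mathcal A(M)$ is compact. Let $\mathcal S$ be a group acting on $M$ such that each $s\in\mathcal S$ is an orbit-nonexpansive mapping. Then there is $x\in M$ with $s(x)=x$ for all $s\in\mathcal S$.
   Context: For a metric space $(M,d)$, a mapping $T:M\to M$ and $x\in M$, the orbit of $x$ is $o_T(x)=\{x\}\cup\{T^nx:n\in\mathbb N\}$. For $x\in M$ and bounded $A\subseteq M$, $D(x,A)=\sup\{d(x,a):a\in A\}$ and $\delta(A)=\sup\{d(x,y):x,y\in A\}$. A mapping $T:M\to M$ is orbit-nonexpansive if $d(Tx,Ty)\le D(x,o_T(y))$ for all $x,y\in M$. A group $\mathcal S$ acts on $M$ if each $s\in\mathcal S$ defines a map $M\to M$, the identity element acts as the identity map, and $(s\cdot t)(x)=s(t(x))$. A subset of $M$ is admissible if it is an intersection of closed balls of $M$; $\mathcal A(M)$ denotes the family of admissible sets. $\mathcal A(M)$ is compact if every subfamily of $\mathcal A(M)$ all of whose finite intersections are nonempty has nonempty intersection. $(M,d)$ has metric normal structure if for every admissible set $A$ with more than one point there exists $z_A\in A$ with $D(z_A,A)<\delta(A)$. *)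

theory Defs
  imports "HOL-Analysis.Analysis" "HOL-Algebra.Group"
begin

definition orbit :: "('a \<Rightarrow> 'a) \<Rightarrow> 'a \<Rightarrow> 'a set" where
  "orbit T x = {x} \<union> {(T ^^ n) x | n. n \<ge> 1}"

definition Dist_set :: "('a \<Rightarrow> 'a \<Rightarrow> real) \<Rightarrow> 'a \<Rightarrow> 'a set \<Rightarrow> real" where
  "Dist_set d x A = (SUP a\<in>A. d x a)"

definition diam_set :: "('a \<Rightarrow> 'a \<Rightarrow> real) \<Rightarrow> 'a set \<Rightarrow> real" where
  "diam_set d A = (SUP p\<in>A \<times> A. d (fst p) (snd p))"

definition orbit_nonexpansive :: "'a set \<Rightarrow> ('a \<Rightarrow> 'a \<Rightarrow> real) \<Rightarrow> ('a \<Rightarrow> 'a) \<Rightarrow> bool" where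
  "orbit_nonexpansive M d T \<longleftrightarrow>
     (\<forall>x\<in>M. \<forall>y\<in>M. d (T x) (T y) \<le> Dist_set d x (orbit T y))"

definition admissible :: "'a set \<Rightarrow> ('a \<Rightarrow> 'a \<Rightarrow> real) \<Rightarrow> 'a set \<Rightarrow> bool" where
  "admissible M d A \<longleftrightarrow>
     (\<exists>\<B>. \<B> \<subseteq> {Metric_space.mcball M d x r | x r. x \<in> M \<and> 0 \<le> r} \<and> A = M \<inter> \<Inter>\<B>)"

definition admissible_compact :: "'a set \<Rightarrow> ('a \<Rightarrow> 'a \<Rightarrow> real) \<Rightarrow> bool" where
  "admissible_compact M d \<longleftrightarrow>
     (\<forall>\<F>. \<F> \<subseteq> Collect (admissible M d) \<longrightarrow>
        (\<forall>\<G>. \<G> \<subseteq> \<F> \<and> finite \<G> \<and> \<G> \<noteq> {} \<longrightarrow> \<Inter>\<G> \<noteq> {}) \<longrightarrow>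
        M \<inter> \<Inter>\<F> \<noteq> {})"

definition metric_normal_structure :: "'a set \<Rightarrow> ('a \<Rightarrow> 'a \<Rightarrow> real) \<Rightarrow> bool" where
  "metric_normal_structure M d \<longleftrightarrow>
     (\<forall>A. admissible M d A \<and> (\<exists>x\<in>A. \<exists>y\<in>A. x \<noteq> y) \<longrightarrow>
        (\<exists>z\<in>A. Dist_set d z A < diam_set d A))"

definition group_acts_on :: "('g, 'b) monoid_scheme \<Rightarrow> 'a set \<Rightarrow> ('g \<Rightarrow> 'a \<Rightarrow> 'a) \<Rightarrow> bool" where
  "group_acts_on G M \<phi> \<longleftrightarrow>
     (\<forall>s\<in>carrier G. \<forall>x\<in>M. \<phi> s x \<in> M) \<and>
     (\<forall>x\<in>M. \<phi> \<one>\<^bsub>G\<^esub> x = x) \<and>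
     (\<forall>s\<in>carrier G. \<forall>t\<in>carrier G. \<forall>x\<in>M. \<phi> (s \<otimes>\<^bsub>G\<^esub> t) x = \<phi> s (\<phi> t x))"

end

theory Submission
  imports Defs
begin

text \<open>By compactness of the admissible sets and Zorn's lemma there is a minimal
  nonempty admissible set \<open>K\<close> invariant under the action. Since every \<open>s\<close> maps \<open>K\<close> onto \<open>K\<close>,
  orbit-nonexpansiveness gives \<open>D(s z, K) \<le> D(z, K)\<close>, so for each \<open>r\<close> the set
  \<open>{z \<in> K. D(z, K) \<le> r}\<close>, an intersection of \<open>K\<close> with closed balls, is again admissible and
  invariant. Taking \<open>r = D(z\<^sub>0, K)\<close> for a point \<open>z\<^sub>0\<close> given by normal structure, minimality forces
  \<open>\<delta>(K) \<le> D(z\<^sub>0, K) < \<delta>(K)\<close> unless \<open>K\<close> is a single point, which is then fixed by every \<open>s\<close>.\<close>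

lemma subset_Zorn_minimal:
  assumes "A \<noteq> {}" and "\<And>C. C \<noteq> {} \<Longrightarrow> subset.chain A C \<Longrightarrow> \<Inter>C \<in> A"
  shows "\<exists>m\<in>A. \<forall>X\<in>A. X \<subseteq> m \<longrightarrow> X = m"
proof -
  have "\<exists>m\<in>uminus ` A. \<forall>X\<in>uminus ` A. m \<subseteq> X \<longrightarrow> X = m"
  proof (rule subset_Zorn_nonempty)
    show "uminus ` A \<noteq> {}" using assms(1) by blast
  next
    fix C assume "C \<noteq> {}" and "subset.chain (uminus ` A) C"
    then have "uminus ` C \<noteq> {}" and "subset.chain A (uminus ` C)"
      by (auto simp: subset_chain_def)
    then have "\<Inter>(uminus ` C) \<in> A" by (rule assms(2))
    moreover have "\<Union>C = - \<Inter>(uminus ` C)" by auto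
    ultimately show "\<Union>C \<in> uminus ` A" by blast
  qed
  then show ?thesis by (metis (no_types, lifting) compl_le_compl_iff double_complement image_iff)
qed

lemma admissible_subset: "admissible M d A \<Longrightarrow> A \<subseteq> M"
  unfolding admissible_def by blast

lemma admissible_mspace: "admissible M d M"
  unfolding admissible_def by (rule exI[of _ "{}"]) simp

lemma (in Metric_space) admissible_mcball: "x \<in> M \<Longrightarrow> 0 \<le> r \<Longrightarrow> admissible M d (mcball x r)"
  unfolding admissible_def by (rule exI[of _ "{mcball x r}"]) auto

lemma admissible_Inter:
  assumes "\<C> \<noteq> {}" and "\<And>K. K \<in> \<C> \<Longrightarrow> admissible M d K"
  shows "admissible M d (\<Inter>\<C>)"
proof -
  define balls where "balls = {Metric_space.mcball M d x r | x r. x \<in> M \<and> 0 \<le> r}"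
  have "\<forall>K\<in>\<C>. \<exists>\<B>. \<B> \<subseteq> balls \<and> M \<inter> \<Inter>\<B> = K"
    using assms(2) unfolding admissible_def balls_def by blast
  then obtain \<B> where \<B>: "\<And>K. K \<in> \<C> \<Longrightarrow> \<B> K \<subseteq> balls \<and> M \<inter> \<Inter>(\<B> K) = K"
    by metis
  have "M \<inter> \<Inter>(\<Union>K\<in>\<C>. \<B> K) = (\<Inter>K\<in>\<C>. M \<inter> \<Inter>(\<B> K))"
    using assms(1) by blast
  also have "\<dots> = \<Inter>\<C>"
    using \<B> by simp
  finally have "\<Inter>\<C> = M \<inter> \<Inter>(\<Union>K\<in>\<C>. \<B> K)" ..
  moreover have "(\<Union>K\<in>\<C>. \<B> K) \<subseteq> balls"
    using \<B> by blast
  ultimately show ?thesis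
    unfolding admissible_def balls_def by blast
qed

context Metric_space
begin

lemma bdd_above_mdist_image:
  assumes "mbounded A" and "x \<in> M"
  shows "bdd_above (d x ` A)"
proof -
  obtain c B where "A \<subseteq> mcball c B"
    using assms(1) unfolding mbounded_def by blast
  then have "d x a \<le> d x c + B" if "a \<in> A" for a
    using that assms(2) triangle[of x c a] by fastforce
  then show ?thesis by (intro bdd_aboveI2)
qed

lemma Dist_set_le_iff:
  assumes "mbounded A" and "A \<noteq> {}" and "x \<in> M"
  shows "Dist_set d x A \<le> r \<longleftrightarrow> (\<forall>a\<in>A. d x a \<le> r)"
  unfolding Dist_set_def using cSUP_le_iff[OF assms(2) bdd_above_mdist_image[OF assms(1,3)]] by simp

lemma mdist_le_Dist_set:
  assumes "mbounded A" and "a \<in> A" and "x \<in> M"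
  shows "d x a \<le> Dist_set d x A"
  unfolding Dist_set_def using cSUP_upper[OF assms(2) bdd_above_mdist_image[OF assms(1,3)]] .

lemma Dist_set_nonneg:
  assumes "mbounded A" and "x \<in> A"
  shows "0 \<le> Dist_set d x A"
  using mdist_le_Dist_set[OF assms] assms mbounded_subset_mspace by force

lemma Dist_set_mono:
  assumes "mbounded B" and "A \<subseteq> B" and "A \<noteq> {}" and "x \<in> M"
  shows "Dist_set d x A \<le> Dist_set d x B"
  using assms mbounded_subset[OF assms(1,2)]
  by (auto simp: Dist_set_le_iff intro: mdist_le_Dist_set)

lemma diam_set_le:
  assumes "mbounded A" and "\<And>z. z \<in> A \<Longrightarrow> Dist_set d z A \<le> r" and "A \<noteq> {}"
  shows "diam_set d A \<le> r"
  unfolding diam_set_def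
proof (rule cSUP_least)
  show "A \<times> A \<noteq> {}" using assms(3) by blast
  fix p assume p: "p \<in> A \<times> A"
  then have "fst p \<in> M"
    using mbounded_subset_mspace[OF assms(1)] by auto
  then show "d (fst p) (snd p) \<le> r"
    using assms(2)[of "fst p"] p Dist_set_le_iff[OF assms(1,3)] by auto
qed

lemma admissible_Dist_set_sublevel:
  assumes "admissible M d K" and "mbounded K" and "0 \<le> r"
  shows "admissible M d {z \<in> K. Dist_set d z K \<le> r}"
proof (cases "K = {}")
  case False
  have KM: "K \<subseteq> M"
    using assms(2) by (rule mbounded_subset_mspace)
  have "Dist_set d z K \<le> r \<longleftrightarrow> (\<forall>y\<in>K. z \<in> mcball y r)" if "z \<in> K" for z
    using that KM Dist_set_le_iff[OF assms(2) False] by (auto simp: commute)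
  then have "{z \<in> K. Dist_set d z K \<le> r} = \<Inter>(insert K ((\<lambda>y. mcball y r) ` K))"
    by auto
  also have "admissible M d \<dots>"
    using assms mbounded_subset_mspace
    by (intro admissible_Inter) (auto intro: admissible_mcball)
  finally show ?thesis .
qed (use assms in simp)

end

definition invariant_under :: "('a \<Rightarrow> 'a) set \<Rightarrow> 'a set \<Rightarrow> bool" where
  "invariant_under F K \<longleftrightarrow> (\<forall>f\<in>F. f ` K \<subseteq> K)"

definition minimal_invariant_admissible ::
    "'a set \<Rightarrow> ('a \<Rightarrow> 'a \<Rightarrow> real) \<Rightarrow> ('a \<Rightarrow> 'a) set \<Rightarrow> 'a set \<Rightarrow> bool" where
  "minimal_invariant_admissible M d F K \<longleftrightarrow>
     admissible M d K \<and> K \<noteq> {} \<and> invariant_under F K \<and>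
     (\<forall>A. admissible M d A \<and> A \<noteq> {} \<and> invariant_under F A \<and> A \<subseteq> K \<longrightarrow> A = K)"

lemma orbit_subset_invariant:
  assumes "f ` K \<subseteq> K" and "y \<in> K"
  shows "orbit f y \<subseteq> K"
proof -
  have "(f ^^ n) y \<in> K" for n
    using assms by (induction n) auto
  then show ?thesis
    unfolding orbit_def using assms(2) by blast
qed

lemma minimal_invariant_admissible_exists:
  assumes "admissible_compact M d" and "M \<noteq> {}" and "invariant_under F M"
  shows "\<exists>K. minimal_invariant_admissible M d F K"
proof -
  define \<K> where "\<K> = {K. admissible M d K \<and> K \<noteq> {} \<and> invariant_under F K}"
  have "\<exists>K\<in>\<K>. \<forall>A\<in>\<K>. A \<subseteq> K \<longrightarrow> A = K"
  proof (rule subset_Zorn_minimal)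
    show "\<K> \<noteq> {}"
      using assms(2,3) admissible_mspace unfolding \<K>_def by blast
  next
    fix C assume "C \<noteq> {}" and chain: "subset.chain \<K> C"
    then have "C \<subseteq> \<K>"
      unfolding subset_chain_def by blast
    then have C: "C \<subseteq> Collect (admissible M d)" "\<And>K. K \<in> C \<Longrightarrow> K \<noteq> {} \<and> invariant_under F K"
      by (auto simp: \<K>_def)
    have "\<Inter>\<G> \<noteq> {}" if "\<G> \<subseteq> C" "finite \<G>" "\<G> \<noteq> {}" for \<G>
    proof -
      have "subset.chain \<K> \<G>"
        using that(1) chain unfolding subset_chain_def by (meson subsetD subset_trans)
      then have "\<Inter>\<G> \<in> \<G>"
        by (rule Inter_in_chain[OF that(2,3)])
      then show ?thesis
        using that(1) C(2) by blast
    qed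
    then have "M \<inter> \<Inter>C \<noteq> {}"
      using assms(1)[unfolded admissible_compact_def, rule_format, OF C(1)] by blast
    moreover have "admissible M d (\<Inter>C)"
      using \<open>C \<noteq> {}\<close> C(1) by (intro admissible_Inter) auto
    moreover have "invariant_under F (\<Inter>C)"
      using C(2) unfolding invariant_under_def by blast
    ultimately show "\<Inter>C \<in> \<K>"
      unfolding \<K>_def by blast
  qed
  then show ?thesis
    unfolding minimal_invariant_admissible_def \<K>_def by blast
qed

context Metric_space
begin

lemma Dist_set_image_le:
  assumes "orbit_nonexpansive M d f" and "mbounded K" and "f ` K \<subseteq> K" and "K \<subseteq> f ` K"
    and "z \<in> K"
  shows "Dist_set d (f z) K \<le> Dist_set d z K"
proof -
  have KM: "K \<subseteq> M"
    using assms(2) by (rule mbounded_subset_mspace)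
  have "d (f z) y \<le> Dist_set d z K" if "y \<in> K" for y
  proof -
    obtain y' where y': "y' \<in> K" "y = f y'"
      using assms(4) \<open>y \<in> K\<close> by blast
    have orbit: "orbit f y' \<subseteq> K" "orbit f y' \<noteq> {}"
      using orbit_subset_invariant[OF assms(3) y'(1)] unfolding orbit_def by auto
    have "d (f z) y = d (f z) (f y')"
      using y'(2) by simp
    also have "\<dots> \<le> Dist_set d z (orbit f y')"
      using assms(1,5) y'(1) KM unfolding orbit_nonexpansive_def by blast
    also have "\<dots> \<le> Dist_set d z K"
      using Dist_set_mono[OF assms(2) orbit] assms(5) KM by blast
    finally show ?thesis .
  qed
  then show ?thesis
    using assms(3,5) KM by (subst Dist_set_le_iff[OF assms(2)]) auto
qed

lemma minimal_invariant_admissible_singleton: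
  assumes "metric_normal_structure M d" and "mbounded M"
    and K: "minimal_invariant_admissible M d F K"
    and F: "\<And>f. f \<in> F \<Longrightarrow> orbit_nonexpansive M d f \<and> K \<subseteq> f ` K"
  shows "\<exists>x. K = {x}"
proof (rule ccontr)
  assume not_singleton: "\<nexists>x. K = {x}"
  have Kadm: "admissible M d K" and "K \<noteq> {}" and Kinv: "invariant_under F K"
    using K unfolding minimal_invariant_admissible_def by auto
  then have Kbdd: "mbounded K"
    using assms(2) admissible_subset mbounded_subset by blast
  obtain x where "x \<in> K"
    using \<open>K \<noteq> {}\<close> by blast
  with not_singleton have "\<exists>x\<in>K. \<exists>y\<in>K. x \<noteq> y"
    by blast
  then obtain z\<^sub>0 where z\<^sub>0: "z\<^sub>0 \<in> K" "Dist_set d z\<^sub>0 K < diam_set d K"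
    using assms(1) Kadm unfolding metric_normal_structure_def by blast
  define C where "C = {z \<in> K. Dist_set d z K \<le> Dist_set d z\<^sub>0 K}"
  have "admissible M d C"
    unfolding C_def using Kadm Kbdd Dist_set_nonneg[OF Kbdd z\<^sub>0(1)]
    by (rule admissible_Dist_set_sublevel)
  moreover have "C \<noteq> {}"
    using z\<^sub>0(1) unfolding C_def by blast
  moreover have "invariant_under F C"
    unfolding invariant_under_def
  proof (intro ballI image_subsetI)
    fix f z assume f: "f \<in> F" and "z \<in> C"
    then have z: "z \<in> K" "Dist_set d z K \<le> Dist_set d z\<^sub>0 K"
      unfolding C_def by auto
    have fK: "f ` K \<subseteq> K"
      using Kinv f unfolding invariant_under_def by blast
    then have "f z \<in> K"
      using z(1) by blast
    moreover have "Dist_set d (f z) K \<le> Dist_set d z K"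
      using F[OF f] Kbdd fK z(1) by (blast intro: Dist_set_image_le)
    ultimately show "f z \<in> C"
      using z(2) unfolding C_def by simp
  qed
  ultimately have "C = K"
    using K unfolding minimal_invariant_admissible_def C_def by blast
  then have "diam_set d K \<le> Dist_set d z\<^sub>0 K"
    using Kbdd \<open>K \<noteq> {}\<close> by (intro diam_set_le) (auto simp: C_def)
  with z\<^sub>0(2) show False by linarith
qed

end

lemma invariant_subset_image_group_action:
  assumes "group G" and "group_acts_on G M \<phi>" and "invariant_under (\<phi> ` carrier G) K"
    and "K \<subseteq> M" and "s \<in> carrier G"
  shows "K \<subseteq> \<phi> s ` K"
proof
  interpret group G by fact
  fix y assume y: "y \<in> K"
  have "\<phi> (inv\<^bsub>G\<^esub> s) y \<in> K"
    using assms(3,5) y unfolding invariant_under_def by auto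
  moreover have "\<phi> s (\<phi> (inv\<^bsub>G\<^esub> s) y) = y"
    using assms(2,4,5) y unfolding group_acts_on_def
    by (metis inv_closed r_inv subsetD)
  ultimately show "y \<in> \<phi> s ` K"
    by (metis image_eqI)
qed

theorem corollary3p4:
  fixes M :: "'a set" and d :: "'a \<Rightarrow> 'a \<Rightarrow> real"
    and G :: "('g, 'b) monoid_scheme" and \<phi> :: "'g \<Rightarrow> 'a \<Rightarrow> 'a"
  assumes "Metric_space M d"
    and "M \<noteq> {}"
    and "Metric_space.mbounded M d M"
    and "metric_normal_structure M d"
    and "admissible_compact M d"
    and "group G"
    and "group_acts_on G M \<phi>"
    and "\<forall>s\<in>carrier G. orbit_nonexpansive M d (\<phi> s)"
  shows "\<exists>x\<in>M. \<forall>s\<in>carrier G. \<phi> s x = x"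
proof -
  interpret Metric_space M d by fact
  let ?F = "\<phi> ` carrier G"
  have "invariant_under ?F M"
    using assms(7) unfolding group_acts_on_def invariant_under_def by blast
  then obtain K where K: "minimal_invariant_admissible M d ?F K"
    using minimal_invariant_admissible_exists assms(2,5) by blast
  then have KM: "K \<subseteq> M" and Kinv: "invariant_under ?F K"
    unfolding minimal_invariant_admissible_def by (auto dest: admissible_subset)
  have "orbit_nonexpansive M d f \<and> K \<subseteq> f ` K" if "f \<in> ?F" for f
    using that assms(6,7,8) invariant_subset_image_group_action[OF _ _ Kinv KM] by blast
  then obtain x where "K = {x}"
    using minimal_invariant_admissible_singleton[OF assms(4,3) K] by blast
  then show ?thesis
    using KM Kinv unfolding invariant_under_def by auto
qed

end
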